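(* For every $m\ge3$, the $m$-candidate anti-plurality rule (score vector $(1,\dots,1,0)$) is not dominated by any other $m$-candidate positional rule.
   Context: For an $m$-candidate positional rule with score vector $w=(w_1,\dots,w_m)$, $1=w_1\ge\cdots\ge w_m=0$, let $\bar w=\frac1m\sum_iw_i$, $\sigma_w^2=\frac1m\sum_iw_i^2-\bar w^2$, $M_w=\{(\lambda,\mu):0\le\lambda\le\mu,\ w_{i+1}\lambda+(1-w_i)\mu\le1,\ i=1,\dots,m-1\}$, and $V_w=\sup\{\lambda(\rho_1(Z)-\bar Z)+\mu(\bar Z-\rho_2(Z)):(\lambda,\mu)\in\sigma_w(\frac{m}{m-1})^{1/2}M_w\}\in[0,\infty]$, where $Z=(Z_1,\dots,Z_m)$ has independent standard normal entries, $\bar Z$ is their mean and $\rho_j(Z)$ the $j$-th largest entry. (Under Impartial Culture, $V_w$ is the limiting distribution of the minimum manipulating coalition size divided by $\sqrt n$.) Let $g_w(v)=\mathbb P(V_w\le v)$. A rule $w$ dominates a rule $w'$ if $g_w(v)\le g_{w'}(v)$ for all $v\ge0$. *)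

theory Defs
  imports "HOL-Probability.Probability"
begin

text \<open>Score vectors are indexed 1..m (functions nat => real; values outside 1..m irrelevant).\<close>

definition is_score_vector :: "nat \<Rightarrow> (nat \<Rightarrow> real) \<Rightarrow> bool" where
  "is_score_vector m w \<longleftrightarrow> w 1 = 1 \<and> w m = 0 \<and> (\<forall>i\<in>{1..<m}. w (Suc i) \<le> w i)"

definition antiplurality :: "nat \<Rightarrow> nat \<Rightarrow> real" where
  "antiplurality m i = (if i < m then 1 else 0)"

definition wbar :: "nat \<Rightarrow> (nat \<Rightarrow> real) \<Rightarrow> real" where
  "wbar m w = (\<Sum>i=1..m. w i) / real m"

definition sigma_w :: "nat \<Rightarrow> (nat \<Rightarrow> real) \<Rightarrow> real" where
  "sigma_w m w = sqrt ((\<Sum>i=1..m. (w i)\<^sup>2) / real m - (wbar m w)\<^sup>2)"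

definition M_w :: "nat \<Rightarrow> (nat \<Rightarrow> real) \<Rightarrow> (real \<times> real) set" where
  "M_w m w = {(la, mu). 0 \<le> la \<and> la \<le> mu \<and>
      (\<forall>i\<in>{1..<m}. w (Suc i) * la + (1 - w i) * mu \<le> 1)}"

definition zbar :: "nat \<Rightarrow> (nat \<Rightarrow> real) \<Rightarrow> real" where
  "zbar m z = (\<Sum>i=1..m. z i) / real m"

definition rho :: "nat \<Rightarrow> nat \<Rightarrow> (nat \<Rightarrow> real) \<Rightarrow> real" where
  "rho m j z = rev (sort (map z [1..<Suc m])) ! (j - 1)"

definition V_w :: "nat \<Rightarrow> (nat \<Rightarrow> real) \<Rightarrow> (nat \<Rightarrow> real) \<Rightarrow> ereal" where
  "V_w m w z = (SUP p \<in> (\<lambda>(la, mu). (sigma_w m w * sqrt (real m / (real m - 1)) * la,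
                                   sigma_w m w * sqrt (real m / (real m - 1)) * mu)) ` M_w m w.
       ereal (fst p * (rho m 1 z - zbar m z) + snd p * (zbar m z - rho m 2 z)))"

definition gauss_vec :: "nat \<Rightarrow> (nat \<Rightarrow> real) measure" where
  "gauss_vec m = PiM {1..m} (\<lambda>_. density lborel std_normal_density)"

definition g_w :: "nat \<Rightarrow> (nat \<Rightarrow> real) \<Rightarrow> real \<Rightarrow> real" where
  "g_w m w v = measure (gauss_vec m) {z \<in> space (gauss_vec m). V_w m w z \<le> ereal v}"

definition dominates :: "nat \<Rightarrow> (nat \<Rightarrow> real) \<Rightarrow> (nat \<Rightarrow> real) \<Rightarrow> bool" where
  "dominates m w w' \<longleftrightarrow> (\<forall>v\<ge>0. g_w m w v \<le> g_w m w' v)"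

end

theory Submission
  imports Defs
begin

(* For anti-plurality, w_i = 1 for all i < m, so (0, mu) lies in M_w for every mu >= 0 and V_w is
   infinite whenever rho_2(Z) < mean(Z), an event of positive probability; hence g_w(v) stays
   below 1 - P(rho_2(Z) < mean(Z)) for all v.  Every other score vector has w_(m-1) < 1, so the
   last constraint of M_w bounds mu by 1/(1 - w_(m-1)); then V_w is finite everywhere and g_w(v)
   tends to 1, eventually exceeding the anti-plurality curve. *)

abbreviation std_normal :: "real measure" where
  "std_normal \<equiv> density lborel std_normal_density"

lemma prob_space_std_normal: "prob_space std_normal"
  using prob_space_normal_density[of 1 0] by simp

lemma measure_std_normal_Icc_pos:
  assumes "a < b"
  shows "0 < measure std_normal {a..b}"
proof -
  interpret prob_space std_normal by (rule prob_space_std_normal)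
  have "{a..b} \<notin> null_sets std_normal"
  proof
    assume "{a..b} \<in> null_sets std_normal"
    then have "AE x in lborel. x \<in> {a..b} \<longrightarrow> std_normal_density x = 0"
      by (subst (asm) null_sets_density_iff) auto
    moreover have "std_normal_density x \<noteq> 0" for x
      using normal_density_pos[of 1 0 x] by simp
    ultimately have "AE x in lborel. x \<notin> {a..b}"
      by (auto elim: AE_mp)
    then have "{a..b} \<in> null_sets lborel"
      by (subst AE_iff_null_sets) auto
    then show False
      using assms by (simp add: null_sets_def)
  qed
  then show ?thesis
    by (simp add: null_sets_def emeasure_eq_measure order_less_le)
qed

lemma prob_space_gauss_vec: "prob_space (gauss_vec m)"
  unfolding gauss_vec_def by (rule prob_space_PiM) (rule prob_space_std_normal)

lemma space_gauss_vec: "space (gauss_vec m) = PiE {1..m} (\<lambda>_. UNIV)"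
  by (simp add: gauss_vec_def space_PiM)

lemma measurable_gauss_vec_component[measurable]:
  assumes "i \<in> {1..m}"
  shows "(\<lambda>z. z i) \<in> borel_measurable (gauss_vec m)"
proof -
  have "(\<lambda>z. z i) \<in> measurable (PiM {1..m} (\<lambda>_. std_normal)) std_normal"
    using assms by (rule measurable_component_singleton)
  also have "measurable (PiM {1..m} (\<lambda>_. std_normal)) std_normal
      = borel_measurable (PiM {1..m} (\<lambda>_. std_normal))"
    by (rule measurable_cong_sets) auto
  finally show ?thesis
    unfolding gauss_vec_def .
qed

lemma measure_gauss_vec_PiE:
  assumes "\<And>i. A i \<in> sets borel"
  shows "measure (gauss_vec m) (PiE {1..m} A) = (\<Prod>i=1..m. measure std_normal (A i))"
proof -
  interpret std_normal: prob_space std_normal by (rule prob_space_std_normal)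
  interpret product_sigma_finite "\<lambda>_::nat. std_normal"
    by (simp add: product_sigma_finite_def std_normal.sigma_finite_measure_axioms)
  have "emeasure (gauss_vec m) (PiE {1..m} A) = (\<Prod>i=1..m. emeasure std_normal (A i))"
    unfolding gauss_vec_def using assms by (subst emeasure_PiM) auto
  also have "\<dots> = ennreal (\<Prod>i=1..m. measure std_normal (A i))"
    by (simp add: std_normal.emeasure_eq_measure prod_ennreal)
  finally show ?thesis
    by (simp add: measure_def prod_nonneg)
qed

lemma rev_sort_nth_le_iff:
  fixes xs :: "'a::linorder list"
  assumes k: "k < length xs"
  shows "rev (sort xs) ! k \<le> t \<longleftrightarrow> length (filter (\<lambda>x. t < x) xs) \<le> k"
proof -
  define ys where "ys = rev (sort xs)"
  have sorted: "sorted (rev ys)" and len: "length ys = length xs"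
    by (simp_all add: ys_def)
  have "length (filter (\<lambda>x. t < x) xs) = length (filter (\<lambda>x. t < x) ys)"
    by (simp add: ys_def rev_filter[symmetric] filter_sort)
  also have "\<dots> = length (takeWhile (\<lambda>x. t < x) ys)"
    using filter_equals_takeWhile_sorted_rev[of id ys t] sorted by simp
  finally have count: "length (filter (\<lambda>x. t < x) xs) = length (takeWhile (\<lambda>x. t < x) ys)" .
  show ?thesis
  proof
    assume "rev (sort xs) ! k \<le> t"
    show "length (filter (\<lambda>x. t < x) xs) \<le> k"
    proof (rule ccontr)
      assume "\<not> ?thesis"
      then have "ys ! k \<in> set (takeWhile (\<lambda>x. t < x) ys)"
        by (metis count linorder_not_le nth_mem takeWhile_nth)
      then show False
        using \<open>rev (sort xs) ! k \<le> t\<close> set_takeWhileD by (fastforce simp: ys_def)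
    qed
  next
    assume le_k: "length (filter (\<lambda>x. t < x) xs) \<le> k"
    then have "ys ! k \<le> ys ! length (takeWhile (\<lambda>x. t < x) ys)"
      using sorted_rev_nth_mono[OF sorted] k len count by simp
    also have "\<dots> \<le> t"
      using nth_length_takeWhile[of "\<lambda>x. t < x" ys] k len count le_k by simp
    finally show "rev (sort xs) ! k \<le> t"
      by (simp add: ys_def)
  qed
qed

lemma rho_le_iff:
  assumes "1 \<le> j" "j \<le> m"
  shows "rho m j z \<le> t \<longleftrightarrow> (\<Sum>i=1..m. of_bool (t < z i) :: real) \<le> real (j - 1)"
proof -
  have "length (filter (\<lambda>x. t < x) (map z [1..<Suc m])) = card ({1..m} \<inter> {i. t < z i})"
    by (auto simp: filter_map comp_def distinct_length_filter intro!: arg_cong[where f = card])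
  then show ?thesis
    unfolding rho_def using assms by (subst rev_sort_nth_le_iff) auto
qed

lemma borel_measurable_rho:
  assumes "1 \<le> j" "j \<le> m"
  shows "rho m j \<in> borel_measurable (gauss_vec m)"
proof (subst borel_measurable_iff_le, intro allI)
  fix t
  have "{z \<in> space (gauss_vec m). (\<Sum>i=1..m. of_bool (t < z i) :: real) \<le> real (j - 1)}
      \<in> sets (gauss_vec m)"
    by measurable
  then show "{z \<in> space (gauss_vec m). rho m j z \<le> t} \<in> sets (gauss_vec m)"
    by (simp add: rho_le_iff[OF assms])
qed

lemma borel_measurable_zbar[measurable]: "zbar m \<in> borel_measurable (gauss_vec m)"
  unfolding zbar_def by measurable

definition V_scale :: "nat \<Rightarrow> (nat \<Rightarrow> real) \<Rightarrow> real" where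
  "V_scale m w = sigma_w m w * sqrt (real m / (real m - 1))"

lemma V_w_eq_SUP:
  "V_w m w z = (SUP (la, mu) \<in> M_w m w.
     ereal (V_scale m w * (la * (rho m 1 z - zbar m z) + mu * (zbar m z - rho m 2 z))))"
  unfolding V_w_def V_scale_def image_comp
  by (intro SUP_cong) (auto simp: algebra_simps)

lemma V_w_le_iff:
  "V_w m w z \<le> ereal v \<longleftrightarrow>
     (\<forall>(la, mu) \<in> M_w m w. V_scale m w * (la * (rho m 1 z - zbar m z) + mu * (zbar m z - rho m 2 z)) \<le> v)"
  unfolding V_w_eq_SUP SUP_le_iff by auto

lemma V_w_ge:
  assumes "(la, mu) \<in> M_w m w"
  shows "ereal (V_scale m w * (la * (rho m 1 z - zbar m z) + mu * (zbar m z - rho m 2 z))) \<le> V_w m w z"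
  unfolding V_w_eq_SUP using assms by (rule SUP_upper2) simp

lemma sets_V_w_le:
  assumes "2 \<le> m"
  shows "{z \<in> space (gauss_vec m). V_w m w z \<le> ereal v} \<in> sets (gauss_vec m)"
proof -
  define K where "K = (\<Inter>p \<in> M_w m w. {q. V_scale m w * (fst p * fst q + snd p * snd q) \<le> v})"
  have "K \<in> sets borel"
    unfolding K_def by (intro borel_closed closed_INT ballI closed_Collect_le continuous_intros)
  moreover have "(\<lambda>z. (rho m 1 z - zbar m z, zbar m z - rho m 2 z)) \<in> borel_measurable (gauss_vec m)"
    using borel_measurable_rho[of 1 m] borel_measurable_rho[of 2 m] assms
    by (intro borel_measurable_Pair borel_measurable_diff borel_measurable_zbar) auto
  ultimately have "(\<lambda>z. (rho m 1 z - zbar m z, zbar m z - rho m 2 z)) -` K \<inter> space (gauss_vec m)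
      \<in> sets (gauss_vec m)"
    by (simp add: measurable_sets)
  also have "(\<lambda>z. (rho m 1 z - zbar m z, zbar m z - rho m 2 z)) -` K \<inter> space (gauss_vec m)
      = {z \<in> space (gauss_vec m). V_w m w z \<le> ereal v}"
    unfolding V_w_le_iff K_def by fastforce
  finally show ?thesis .
qed

lemma score_vector_antimono:
  assumes "is_score_vector m w" "1 \<le> i" "i \<le> j" "j \<le> m"
  shows "w j \<le> w i"
  using assms(3,4)
proof (induction j rule: dec_induct)
  case base
  then show ?case by simp
next
  case (step k)
  then have "w (Suc k) \<le> w k"
    using assms(1,2) by (simp add: is_score_vector_def)
  with step show ?case by simp
qed

lemma score_vector_penultimate_less_1:
  assumes "2 \<le> m" "is_score_vector m w" "\<exists>i\<in>{1..m}. w i \<noteq> antiplurality m i"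
  shows "w (m - 1) < 1"
proof (rule ccontr)
  assume "\<not> w (m - 1) < 1"
  have "w i = antiplurality m i" if "i \<in> {1..m}" for i
  proof (cases "i = m")
    case True
    then show ?thesis using assms(2) by (simp add: is_score_vector_def antiplurality_def)
  next
    case False
    then have "w (m - 1) \<le> w i" "w i \<le> w 1"
      using score_vector_antimono[OF assms(2)] that by auto
    then show ?thesis
      using assms(2) \<open>\<not> w (m - 1) < 1\<close> False that by (simp add: is_score_vector_def antiplurality_def)
  qed
  then show False using assms(3) by blast
qed

lemma M_w_snd_bound:
  assumes "(la, mu) \<in> M_w m w" "2 \<le> m" "w m = 0"
  shows "(1 - w (m - 1)) * mu \<le> 1"
proof -
  have "m - 1 \<in> {1..<m}" "Suc (m - 1) = m"
    using assms(2) by auto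
  then show ?thesis
    using assms(1,3) unfolding M_w_def by fastforce
qed

lemma V_w_less_infinity:
  assumes "2 \<le> m" "w m = 0" "w (m - 1) < 1"
  shows "V_w m w z < \<infinity>"
proof -
  define a b where "a = rho m 1 z - zbar m z" and "b = zbar m z - rho m 2 z"
  define U where "U = 1 / (1 - w (m - 1))"
  have "V_scale m w * (la * a + mu * b) \<le> \<bar>V_scale m w\<bar> * (U * (\<bar>a\<bar> + \<bar>b\<bar>))"
    if M: "(la, mu) \<in> M_w m w" for la mu
  proof -
    have "0 \<le> la" "la \<le> mu" "0 \<le> mu"
      using M by (auto simp: M_w_def)
    have "mu \<le> U"
      using M_w_snd_bound[OF M assms(1,2)] assms(3) by (simp add: U_def field_simps)
    have "\<bar>la * a + mu * b\<bar> \<le> la * \<bar>a\<bar> + mu * \<bar>b\<bar>"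
      using abs_triangle_ineq[of "la * a" "mu * b"] \<open>0 \<le> la\<close> \<open>0 \<le> mu\<close> by (simp add: abs_mult)
    also have "\<dots> \<le> mu * (\<bar>a\<bar> + \<bar>b\<bar>)"
      using \<open>la \<le> mu\<close> by (simp add: distrib_left mult_right_mono)
    also have "\<dots> \<le> U * (\<bar>a\<bar> + \<bar>b\<bar>)"
      using \<open>mu \<le> U\<close> by (simp add: mult_right_mono)
    finally have "\<bar>la * a + mu * b\<bar> \<le> U * (\<bar>a\<bar> + \<bar>b\<bar>)" .
    then have "\<bar>V_scale m w\<bar> * \<bar>la * a + mu * b\<bar> \<le> \<bar>V_scale m w\<bar> * (U * (\<bar>a\<bar> + \<bar>b\<bar>))"
      by (simp add: mult_left_mono)
    then show ?thesis
      by (metis abs_ge_self abs_mult order_trans)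
  qed
  then have "V_w m w z \<le> ereal (\<bar>V_scale m w\<bar> * (U * (\<bar>a\<bar> + \<bar>b\<bar>)))"
    unfolding V_w_le_iff a_def b_def by auto
  then show ?thesis
    by (rule order.strict_trans1) simp
qed

lemma g_w_tendsto_1:
  assumes "2 \<le> m" "\<And>z. V_w m w z < \<infinity>"
  shows "(\<lambda>n. g_w m w (real n)) \<longlonglongrightarrow> 1"
proof -
  interpret prob_space "gauss_vec m" by (rule prob_space_gauss_vec)
  define S where "S n = {z \<in> space (gauss_vec m). V_w m w z \<le> ereal (real n)}" for n :: nat
  have "(\<lambda>n. measure (gauss_vec m) (S n)) \<longlonglongrightarrow> measure (gauss_vec m) (\<Union>n. S n)"
    using assms(1)
    by (intro finite_Lim_measure_incseq) (auto simp: S_def incseq_def intro: order_trans sets_V_w_le)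
  moreover have "(\<Union>n. S n) = space (gauss_vec m)"
  proof -
    have "\<exists>n::nat. V_w m w z \<le> ereal (real n)" for z
      using assms(2)[of z] less_PInf_Ex_of_nat[of "V_w m w z"] by (auto intro: less_imp_le)
    then show ?thesis by (auto simp: S_def)
  qed
  ultimately show ?thesis
    by (simp add: g_w_def S_def prob_space)
qed

lemma V_scale_antiplurality_pos:
  assumes "2 \<le> m"
  shows "0 < V_scale m (antiplurality m)"
proof -
  have "{1..m} = insert m {1..<m}"
    using assms by auto
  then have sums: "(\<Sum>i=1..m. antiplurality m i) = real m - 1"
    "(\<Sum>i=1..m. (antiplurality m i)\<^sup>2) = real m - 1"
    using assms by (simp_all add: antiplurality_def of_nat_diff)
  define q where "q = (real m - 1) / real m"
  have "0 < q" "q < 1"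
    using assms by (auto simp: q_def field_simps)
  then have "0 < q - q\<^sup>2"
    by (simp add: power2_eq_square mult_less_cancel_left1)
  moreover have "sigma_w m (antiplurality m) = sqrt (q - q\<^sup>2)"
    unfolding sigma_w_def wbar_def sums q_def by simp
  ultimately show ?thesis
    using assms by (simp add: V_scale_def)
qed

lemma V_w_antiplurality_infinite:
  assumes "2 \<le> m" "rho m 2 z < zbar m z"
  shows "V_w m (antiplurality m) z = \<infinity>"
proof (rule ereal_top)
  fix B
  define c where "c = V_scale m (antiplurality m)"
  define mu where "mu = max 0 B / (c * (zbar m z - rho m 2 z))"
  have "0 < c"
    using V_scale_antiplurality_pos[OF assms(1)] by (simp add: c_def)
  then have "0 \<le> mu"
    using assms(2) by (simp add: mu_def)
  then have "(0, mu) \<in> M_w m (antiplurality m)"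
    by (auto simp: M_w_def antiplurality_def)
  from V_w_ge[OF this, of z] have "ereal (c * (mu * (zbar m z - rho m 2 z))) \<le> V_w m (antiplurality m) z"
    by (simp add: c_def)
  moreover have "c * (mu * (zbar m z - rho m 2 z)) = max 0 B"
    using \<open>0 < c\<close> assms(2) by (simp add: mu_def)
  ultimately show "ereal B \<le> V_w m (antiplurality m) z"
    by (simp add: order_trans[rotated])
qed

definition runner_up_below_mean :: "nat \<Rightarrow> (nat \<Rightarrow> real) set" where
  "runner_up_below_mean m = {z \<in> space (gauss_vec m). rho m 2 z < zbar m z}"

lemma sets_runner_up_below_mean:
  assumes "2 \<le> m"
  shows "runner_up_below_mean m \<in> sets (gauss_vec m)"
proof -
  have [measurable]: "rho m 2 \<in> borel_measurable (gauss_vec m)"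
    using assms by (simp add: borel_measurable_rho)
  show ?thesis
    unfolding runner_up_below_mean_def by measurable
qed

lemma rho2_less_zbar_if_one_large:
  assumes "2 \<le> m"
    and z: "z \<in> PiE {1..m} (\<lambda>i. if i = 1 then {2 * real m..2 * real m + 1} else {0..1})"
  shows "rho m 2 z < zbar m z"
proof -
  have z_in: "z i \<in> (if i = 1 then {2 * real m..2 * real m + 1} else {0..1})" if "i \<in> {1..m}" for i
    using PiE_mem[OF z that] .
  have "i = 1" if "i \<in> {1..m}" "1 < z i" for i
  proof (rule ccontr)
    assume "i \<noteq> 1"
    then have "z i \<le> 1"
      using z_in[OF that(1)] by simp
    then show False
      using that(2) by simp
  qed
  then have "card ({1..m} \<inter> {i. 1 < z i}) \<le> card {1::nat}"
    by (intro card_mono) auto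
  then have "rho m 2 z \<le> 1"
    using assms by (simp add: rho_le_iff)
  have "0 \<le> z i" if "i \<in> {1..m}" for i
    using z_in[OF that] by (cases "i = 1") auto
  then have "z 1 \<le> (\<Sum>i=1..m. z i)"
    using assms by (intro member_le_sum) auto
  moreover have "2 * real m \<le> z 1"
    using z_in[of 1] assms by simp
  ultimately have "2 \<le> zbar m z"
    using assms by (simp add: zbar_def le_divide_eq)
  with \<open>rho m 2 z \<le> 1\<close> show ?thesis by simp
qed

lemma prob_runner_up_below_mean_pos:
  assumes "2 \<le> m"
  shows "0 < measure (gauss_vec m) (runner_up_below_mean m)"
proof -
  interpret prob_space "gauss_vec m" by (rule prob_space_gauss_vec)
  define B where "B = PiE {1..m} (\<lambda>i. if i = 1 then {2 * real m..2 * real m + 1} else {0..1})"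
  have "0 < measure (gauss_vec m) B"
    unfolding B_def by (subst measure_gauss_vec_PiE) (auto intro!: prod_pos measure_std_normal_Icc_pos)
  also have "\<dots> \<le> measure (gauss_vec m) (runner_up_below_mean m)"
  proof (rule finite_measure_mono)
    show "B \<subseteq> runner_up_below_mean m"
      using rho2_less_zbar_if_one_large[OF assms]
      by (auto simp: B_def runner_up_below_mean_def space_gauss_vec)
  qed (rule sets_runner_up_below_mean[OF assms])
  finally show ?thesis .
qed

lemma g_w_antiplurality_le:
  assumes "2 \<le> m"
  shows "g_w m (antiplurality m) v \<le> 1 - measure (gauss_vec m) (runner_up_below_mean m)"
proof -
  interpret prob_space "gauss_vec m" by (rule prob_space_gauss_vec)
  have "{z \<in> space (gauss_vec m). V_w m (antiplurality m) z \<le> ereal v}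
      \<subseteq> space (gauss_vec m) - runner_up_below_mean m"
    using V_w_antiplurality_infinite[OF assms] by (auto simp: runner_up_below_mean_def)
  then have "g_w m (antiplurality m) v \<le> measure (gauss_vec m) (space (gauss_vec m) - runner_up_below_mean m)"
    unfolding g_w_def using sets_runner_up_below_mean[OF assms] by (intro finite_measure_mono) auto
  also have "\<dots> = 1 - measure (gauss_vec m) (runner_up_below_mean m)"
    using sets_runner_up_below_mean[OF assms] by (rule prob_compl)
  finally show ?thesis .
qed

theorem proposition13:
  fixes m :: nat and w :: "nat \<Rightarrow> real"
  assumes "m \<ge> 3"
    and "is_score_vector m w"
    and "\<exists>i\<in>{1..m}. w i \<noteq> antiplurality m i"
  shows "\<not> dominates m w (antiplurality m)"
proof
  assume dom: "dominates m w (antiplurality m)"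
  define p where "p = measure (gauss_vec m) (runner_up_below_mean m)"
  have m: "2 \<le> m" using assms(1) by simp
  have "w (m - 1) < 1"
    using score_vector_penultimate_less_1[OF m assms(2,3)] .
  then have "(\<lambda>n. g_w m w (real n)) \<longlonglongrightarrow> 1"
    using assms(2) m by (intro g_w_tendsto_1 V_w_less_infinity) (auto simp: is_score_vector_def)
  moreover have "1 - p < 1"
    using prob_runner_up_below_mean_pos[OF m] by (simp add: p_def)
  ultimately have "\<forall>\<^sub>F n in sequentially. 1 - p < g_w m w (real n)"
    by (rule order_tendstoD(1))
  then obtain n where "1 - p < g_w m w (real n)"
    by (auto simp: eventually_sequentially)
  moreover have "g_w m w (real n) \<le> g_w m (antiplurality m) (real n)"
    using dom by (simp add: dominates_def)
  moreover have "g_w m (antiplurality m) (real n) \<le> 1 - p"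
    unfolding p_def by (rule g_w_antiplurality_le[OF m])
  ultimately show False by simp
qed

end
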